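(* Let $N\ge 2$, $d\ge 1$, and consider the system $$\dot x_i(t)=\frac{1}{N}\sum_{j=1}^N M_{ij}(t)\,(x_j(t)-x_i(t)),\qquad i=1,\dots,N,$$ with $x_i(t)\in\mathbb{R}^d$, where all weights $M_{ij}:[0,+\infty)\to[0,1]$ are Lebesgue measurable, and let $x(t)=(x_1(t),\dots,x_N(t))$ be a solution (in the Carathéodory sense). Fix $T,\mu>0$ and let $G(t)$ be the $(T,\mu)$-connectivity graph associated to the $M_{ij}$. Assume that there exists a constant directed graph $G^*$ on the nodes $\{1,\dots,N\}$ such that all arrows of $G^*$ are arrows of $G(kT)$ for every $k\in\mathbb{N}$, that $G^*$ admits a globally reachable node $I$, and let $d^*:=d(G^*,I)$ be its length to $I$. Set $\tau=d^*T$ and $$C=1-\frac12\left(\frac{\mu T}{N+\mu T}\right)^{d^*}\exp(-2d^*T).$$ Then for all $n\in\mathbb{N}$, $$\max_{i,j}|x_i(n\tau)-x_j(n\tau)|\le C^n\max_{i,j}|x_i(0)-x_j(0)|.$$ Moreover, for all $t\in[0,\tau]$ and $n\in\mathbb{N}$, $$\max_{i,j}|x_i(n\tau+t)-x_j(n\tau+t)|\le \varphi(t)\,C^n\max_{i,j}|x_i(0)-x_j(0)|,$$ where $\delta:=-\frac{N}{2(N-1)}\log(C)$ and $$\varphi(t)=\begin{cases}1 & t\in[0,\tau-\delta],\\ C\exp\!\left(2\frac{N-1}{N}(\tau-t)\right) & t\in[\tau-\delta,\tau].\end{cases}$$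
   Context: $|\cdot|$ is the Euclidean norm. Given $T,\mu>0$ and functions $M_{ij}:[0,+\infty)\to[0,1]$, the $(T,\mu)$-connectivity graph at time $t\ge 0$ is the directed graph $G(t)$ with node set $\{1,\dots,N\}$ in which the arrow $i\to j$ exists iff $\frac1T\int_t^{t+T}M_{ij}(s)\,ds\ge\mu$. A node $I$ of a directed graph $G$ is globally reachable if from every node there is a directed path to $I$. For such $I$, $d(i,I)$ is the minimal number of arrows of a directed path $i\to j_1\to\dots\to j_n=I$ in $G$, and the length of $G$ to $I$ is $d(G,I):=\max_{i} d(i,I)$. $\mathbb{N}$ includes $0$. *)

theory Defs
  imports "HOL-Analysis.Analysis"
begin

definition conn_arrow :: "real \<Rightarrow> real \<Rightarrow> (nat \<Rightarrow> nat \<Rightarrow> real \<Rightarrow> real) \<Rightarrow> real \<Rightarrow> nat \<Rightarrow> nat \<Rightarrow> bool" where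
  "conn_arrow T \<mu> M t i j \<longleftrightarrow> (1 / T) * integral {t..t+T} (M i j) \<ge> \<mu>"

definition globally_reachable :: "nat \<Rightarrow> (nat \<times> nat) set \<Rightarrow> nat \<Rightarrow> bool" where
  "globally_reachable N E I \<longleftrightarrow> I \<in> {1..N} \<and> (\<forall>i\<in>{1..N}. (i, I) \<in> E\<^sup>*)"

definition path_dist :: "(nat \<times> nat) set \<Rightarrow> nat \<Rightarrow> nat \<Rightarrow> nat" where
  "path_dist E i I = (LEAST n. (i, I) \<in> E ^^ n)"

definition graph_length :: "nat \<Rightarrow> (nat \<times> nat) set \<Rightarrow> nat \<Rightarrow> nat" where
  "graph_length N E I = Max ((\<lambda>i. path_dist E i I) ` {1..N})"

definition diameter :: "nat \<Rightarrow> (nat \<Rightarrow> real \<Rightarrow> 'a::real_normed_vector) \<Rightarrow> real \<Rightarrow> real" where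
  "diameter N x t = Max {norm (x i t - x j t) | i j. i \<in> {1..N} \<and> j \<in> {1..N}}"

end

(* Projecting onto a direction v turns the system into N scalar systems with the same weights,
   and the diameter is recovered from the spreads max - min of these projections.
   For a scalar system the interval [min, max] spanned by the agents at one time contains them
   at all later times; a nonnegative solution decays at most like exp (- t) in each agent; and
   a persistent arrow i -> j lifts i by a fixed fraction mu T / N of the lower bound of j.
   Chaining these estimates along paths of length at most d* into the globally reachable node I:
   if I starts a block of length tau in the lower half of [min, max], every agent ends the block
   at least (1/2) q^d* exp (- 2 d* T) (max - min) below max, with q = mu T / (N + mu T), and
   symmetrically if I starts in the upper half.  Hence the spread contracts by C per block.
   Within a block the spread shrinks at most like exp (- 2 (N - 1) / N t), which gives phi. *)

theory Submission
  imports Defs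
begin

lemma last_zero_before_negative:
  fixes w :: "real \<Rightarrow> real"
  assumes "a \<le> b" and cont: "continuous_on {a..b} w" and "0 \<le> w a" and "w b < 0"
  obtains r where "a \<le> r" "r \<le> b" "w r = 0" "\<And>u. r \<le> u \<Longrightarrow> u \<le> b \<Longrightarrow> w u \<le> 0"
proof -
  let ?S = "{a..b} \<inter> w -` {0..}"
  have bdd: "bdd_above ?S" by (rule bdd_aboveI[of _ b]) auto
  define r where "r = Sup ?S"
  have "r \<in> ?S" unfolding r_def
    by (rule closed_contains_Sup[OF _ bdd]) (use assms continuous_closed_preimage[OF cont] in auto)
  then have r: "a \<le> r" "r \<le> b" "0 \<le> w r" by auto
  have neg: "w u < 0" if "r < u" "u \<le> b" for u
  proof (rule ccontr)
    assume "\<not> w u < 0"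
    then have "u \<le> r" unfolding r_def using that r by (intro cSup_upper[OF _ bdd]) auto
    then show False using that by simp
  qed
  obtain z where z: "r \<le> z" "z \<le> b" "w z = 0"
    using IVT2'[of w b 0 r] r assms continuous_on_subset[OF cont] by force
  then have "z = r" using neg[of z] by force
  show thesis
  proof (rule that[OF r(1,2)])
    show "w r = 0" using z \<open>z = r\<close> by simp
    show "w u \<le> 0" if "r \<le> u" "u \<le> b" for u
      using neg[of u] that \<open>w r = 0\<close> by (cases "u = r") auto
  qed
qed

lemma nonneg_of_integral_inequality:
  fixes w :: "real \<Rightarrow> real"
  assumes "a \<le> b" "0 \<le> c" and cont: "continuous_on {a..b} w" and "0 \<le> w a"
    and ineq: "\<And>r t. a \<le> r \<Longrightarrow> r \<le> t \<Longrightarrow> t \<le> b \<Longrightarrow> - c * integral {r..t} w \<le> w t - w r"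
  shows "0 \<le> w b"
proof (rule ccontr)
  assume "\<not> 0 \<le> w b"
  then have "w b < 0" by simp
  then obtain r where r: "a \<le> r" "r \<le> b" "w r = 0" "\<And>u. r \<le> u \<Longrightarrow> u \<le> b \<Longrightarrow> w u \<le> 0"
    using last_zero_before_negative[OF \<open>a \<le> b\<close> cont \<open>0 \<le> w a\<close>] by blast
  have "w integrable_on {r..b}"
    using r by (intro integrable_continuous_interval continuous_on_subset[OF cont]) auto
  then have "integral {r..b} w \<le> integral {r..b} (\<lambda>_. 0::real)"
    using r(4) by (intro integral_le) auto
  then have "0 \<le> - c * integral {r..b} w" using \<open>0 \<le> c\<close> by (simp add: mult_nonneg_nonpos)
  with ineq[OF r(1,2) order_refl] r(3) \<open>w b < 0\<close> show False by simp
qed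

lemma has_integral_exp_decay:
  fixes c a r t :: real
  assumes "c \<noteq> 0" "r \<le> t"
  shows "((\<lambda>u. exp (- c * (u - a))) has_integral (exp (- c * (r - a)) - exp (- c * (t - a))) / c) {r..t}"
proof -
  have "((\<lambda>u. exp (- c * (u - a))) has_integral
      (- exp (- c * (t - a)) / c) - (- exp (- c * (r - a)) / c)) {r..t}"
  proof (rule fundamental_theorem_of_calculus[OF \<open>r \<le> t\<close>])
    fix u assume "u \<in> {r..t}"
    show "((\<lambda>u. - exp (- c * (u - a)) / c) has_vector_derivative exp (- c * (u - a))) (at u within {r..t})"
      unfolding has_real_derivative_iff_has_vector_derivative[symmetric]
      using \<open>c \<noteq> 0\<close> by (auto intro!: derivative_eq_intros)
  qed
  then show ?thesis by (simp add: diff_divide_distrib)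
qed

lemma has_integral_exp_reverse:
  fixes s t :: real
  assumes "s \<le> t"
  shows "((\<lambda>u. exp (t - u)) has_integral exp (t - s) - 1) {s..t}"
proof -
  have "((\<lambda>u. exp (t - u)) has_integral (- exp (t - t)) - (- exp (t - s))) {s..t}"
  proof (rule fundamental_theorem_of_calculus[OF \<open>s \<le> t\<close>])
    fix u assume "u \<in> {s..t}"
    show "((\<lambda>u. - exp (t - u)) has_vector_derivative exp (t - u)) (at u within {s..t})"
      unfolding has_real_derivative_iff_has_vector_derivative[symmetric]
      by (auto intro!: derivative_eq_intros)
  qed
  then show ?thesis by (simp only: diff_self exp_zero minus_minus diff_minus_eq_add) simp
qed

lemma gronwall_lower_bound:
  fixes y :: "real \<Rightarrow> real"
  assumes "a \<le> b" "0 < c" and cont: "continuous_on {a..b} y"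
    and ineq: "\<And>r t. a \<le> r \<Longrightarrow> r \<le> t \<Longrightarrow> t \<le> b \<Longrightarrow> - c * integral {r..t} y \<le> y t - y r"
  shows "exp (- c * (b - a)) * y a \<le> y b"
proof -
  define e where "e u = y a * exp (- c * (u - a))" for u
  have cont_e: "continuous_on {a..b} e" unfolding e_def by (intro continuous_intros)
  have "0 \<le> y b - e b"
  proof (rule nonneg_of_integral_inequality[OF \<open>a \<le> b\<close>])
    show "continuous_on {a..b} (\<lambda>u. y u - e u)" by (intro continuous_intros cont cont_e)
    fix r t assume rt: "a \<le> r" "r \<le> t" "t \<le> b"
    have "(e has_integral (e r - e t) / c) {r..t}"
      unfolding e_def using has_integral_mult_right[OF has_integral_exp_decay[of c r t a]] rt \<open>0 < c\<close>
      by (simp add: right_diff_distrib)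
    moreover have "y integrable_on {r..t}"
      using rt by (intro integrable_continuous_interval continuous_on_subset[OF cont]) auto
    ultimately have "c * integral {r..t} (\<lambda>u. y u - e u) = c * integral {r..t} y - (e r - e t)"
      using \<open>0 < c\<close> by (simp add: integral_diff has_integral_integrable integral_unique right_diff_distrib field_simps)
    then show "- c * integral {r..t} (\<lambda>u. y u - e u) \<le> (y t - e t) - (y r - e r)"
      using ineq[OF rt] by simp
  qed (use \<open>0 < c\<close> in \<open>auto simp: e_def\<close>)
  then show ?thesis by (simp add: e_def mult.commute)
qed

lemma continuous_on_Max_Min_image:
  fixes g :: "'b \<Rightarrow> 'c::topological_space \<Rightarrow> 'a::linorder_topology"
  assumes "finite A" "A \<noteq> {}" "\<And>k. k \<in> A \<Longrightarrow> continuous_on S (g k)"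
  shows "continuous_on S (\<lambda>u. Max ((\<lambda>k. g k u) ` A)) \<and> continuous_on S (\<lambda>u. Min ((\<lambda>k. g k u) ` A))"
  using assms by (induction A rule: finite_ne_induct)
    (auto intro!: continuous_on_max continuous_on_min)

definition spread :: "nat \<Rightarrow> (nat \<Rightarrow> real \<Rightarrow> real) \<Rightarrow> real \<Rightarrow> real" where
  "spread N y t = Max ((\<lambda>k. y k t) ` {1..N}) - Min ((\<lambda>k. y k t) ` {1..N})"

lemma spread_ge:
  assumes "k \<in> {1..N}" "l \<in> {1..N}"
  shows "y k t - y l t \<le> spread N y t"
  unfolding spread_def using assms by (intro diff_mono) auto

lemma spread_attained:
  assumes "1 \<le> N"
  obtains k l where "k \<in> {1..N}" "l \<in> {1..N}" "spread N y t = y k t - y l t"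
proof -
  have fin: "finite ((\<lambda>k. y k t) ` {1..N})" and ne: "(\<lambda>k. y k t) ` {1..N} \<noteq> {}"
    using assms by auto
  obtain k l where "k \<in> {1..N}" "y k t = Max ((\<lambda>k. y k t) ` {1..N})"
    "l \<in> {1..N}" "y l t = Min ((\<lambda>k. y k t) ` {1..N})"
    using Max_in[OF fin ne] Min_in[OF fin ne] by auto
  then show thesis by (intro that[of k l]) (auto simp: spread_def)
qed

lemma spread_le_iff:
  assumes "1 \<le> N"
  shows "spread N y t \<le> S \<longleftrightarrow> (\<forall>k\<in>{1..N}. \<forall>l\<in>{1..N}. y k t - y l t \<le> S)"
  using spread_ge spread_attained[OF assms] by (metis order_trans)

lemma spread_nonneg: "1 \<le> N \<Longrightarrow> 0 \<le> spread N y t"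
  using spread_ge[of 1 N 1 y t] by simp

lemma spread_bounds:
  assumes "1 \<le> N"
  obtains lo hi where "\<And>k. k \<in> {1..N} \<Longrightarrow> lo \<le> y k t \<and> y k t \<le> hi" "spread N y t = hi - lo"
proof -
  have "finite ((\<lambda>k. y k t) ` {1..N})" by simp
  then show thesis by (intro that[of "Min ((\<lambda>k. y k t) ` {1..N})" "Max ((\<lambda>k. y k t) ` {1..N})"])
    (auto simp: spread_def)
qed

lemma continuous_on_spread:
  assumes "1 \<le> N" "\<And>k. k \<in> {1..N} \<Longrightarrow> continuous_on S (y k)"
  shows "continuous_on S (spread N y)"
proof -
  have "continuous_on S (\<lambda>u. Max ((\<lambda>k. y k u) ` {1..N}) - Min ((\<lambda>k. y k u) ` {1..N}))"
    using continuous_on_Max_Min_image[of "{1..N}" S y] assms by (intro continuous_on_diff) auto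
  then show ?thesis by (simp add: spread_def[abs_def])
qed

lemma diameter_eq_Max_image:
  "diameter N x t = Max ((\<lambda>(i, j). norm (x i t - x j t)) ` ({1..N} \<times> {1..N}))"
proof -
  have "{norm (x i t - x j t) | i j. i \<in> {1..N} \<and> j \<in> {1..N}}
      = (\<lambda>(i, j). norm (x i t - x j t)) ` ({1..N} \<times> {1..N})"
    by (auto simp: image_iff) blast
  then show ?thesis unfolding diameter_def by simp
qed

lemma diameter_ge:
  assumes "i \<in> {1..N}" "j \<in> {1..N}"
  shows "norm (x i t - x j t) \<le> diameter N x t"
  unfolding diameter_eq_Max_image using assms by (auto intro!: Max_ge)

lemma diameter_attained:
  assumes "1 \<le> N"
  obtains i j where "i \<in> {1..N}" "j \<in> {1..N}" "diameter N x t = norm (x i t - x j t)"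
proof -
  have "diameter N x t \<in> (\<lambda>(i, j). norm (x i t - x j t)) ` ({1..N} \<times> {1..N})"
    unfolding diameter_eq_Max_image using assms by (intro Max_in) auto
  then show thesis using that by auto
qed

lemma spread_inner_le_diameter:
  fixes x :: "nat \<Rightarrow> real \<Rightarrow> 'a::real_inner"
  assumes "1 \<le> N"
  shows "spread N (\<lambda>k u. x k u \<bullet> v) t \<le> diameter N x t * norm v"
proof -
  have "x k t \<bullet> v - x l t \<bullet> v \<le> diameter N x t * norm v" if "k \<in> {1..N}" "l \<in> {1..N}" for k l
  proof -
    have "x k t \<bullet> v - x l t \<bullet> v \<le> norm (x k t - x l t) * norm v"
      using norm_cauchy_schwarz[of "x k t - x l t" v] by (simp add: inner_diff_left)
    also have "\<dots> \<le> diameter N x t * norm v"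
      using diameter_ge[OF that] by (intro mult_right_mono) auto
    finally show ?thesis .
  qed
  then show ?thesis unfolding spread_le_iff[OF assms] by blast
qed

(* Test the spreads in the direction of the pair realising the diameter at time t. *)
lemma diameter_le_of_spread_le:
  fixes x :: "nat \<Rightarrow> real \<Rightarrow> 'a::real_inner"
  assumes "1 \<le> N" "0 \<le> K"
    and spread_le: "\<And>v. spread N (\<lambda>k u. x k u \<bullet> v) t \<le> K * spread N (\<lambda>k u. x k u \<bullet> v) s"
  shows "diameter N x t \<le> K * diameter N x s"
proof -
  obtain i j where ij: "i \<in> {1..N}" "j \<in> {1..N}" "diameter N x t = norm (x i t - x j t)"
    using diameter_attained[OF \<open>1 \<le> N\<close>] by blast
  define v where "v = x i t - x j t"
  have "norm v * norm v = v \<bullet> v" by (simp add: dot_square_norm power2_eq_square)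
  also have "\<dots> = x i t \<bullet> v - x j t \<bullet> v" unfolding v_def by (rule inner_diff_left)
  also have "\<dots> \<le> spread N (\<lambda>k u. x k u \<bullet> v) t" using spread_ge[OF ij(1,2), of "\<lambda>k u. x k u \<bullet> v" t] by simp
  also have "\<dots> \<le> K * (diameter N x s * norm v)"
    using spread_le[of v] spread_inner_le_diameter[OF \<open>1 \<le> N\<close>, of x v s] \<open>0 \<le> K\<close>
    by (smt (verit) mult_left_mono)
  finally have "norm v * norm v \<le> (K * diameter N x s) * norm v" by simp
  then have "norm v \<le> K * diameter N x s"
    using diameter_ge[OF ij(1,1), of x s] \<open>0 \<le> K\<close> by (cases "v = 0") auto
  then show ?thesis unfolding ij(3) v_def .
qed

lemma path_dist_relpow:
  assumes "(i, I) \<in> E\<^sup>*"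
  shows "(i, I) \<in> E ^^ path_dist E i I"
proof -
  obtain n where "(i, I) \<in> E ^^ n" using assms rtrancl_power by blast
  then show ?thesis unfolding path_dist_def by (rule LeastI)
qed

lemma path_dist_le_graph_length: "i \<in> {1..N} \<Longrightarrow> path_dist E i I \<le> graph_length N E I"
  unfolding graph_length_def by (rule Max_ge) auto

lemma conn_arrow_integral:
  assumes "conn_arrow T \<mu> M t i j" "0 < T" "0 < \<mu>"
  shows "\<mu> * T \<le> integral {t..t + T} (M i j)" "M i j integrable_on {t..t + T}"
proof -
  show ge: "\<mu> * T \<le> integral {t..t + T} (M i j)"
    using assms unfolding conn_arrow_def by (simp add: field_simps)
  show "M i j integrable_on {t..t + T}"
  proof (rule ccontr)
    assume "\<not> M i j integrable_on {t..t + T}"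
    then have "integral {t..t + T} (M i j) = 0" by (rule not_integrable_integral)
    moreover have "0 < \<mu> * T" using assms(2,3) by simp
    ultimately show False using ge by linarith
  qed
qed

locale consensus_system =
  fixes N :: nat and M :: "nat \<Rightarrow> nat \<Rightarrow> real \<Rightarrow> real"
  assumes weight_range: "\<And>i j t. i \<in> {1..N} \<Longrightarrow> j \<in> {1..N} \<Longrightarrow> 0 \<le> t \<Longrightarrow> 0 \<le> M i j t \<and> M i j t \<le> 1"
begin

definition drift :: "(nat \<Rightarrow> real \<Rightarrow> real) \<Rightarrow> nat \<Rightarrow> real \<Rightarrow> real" where
  "drift y i u = (1 / real N) * (\<Sum>j=1..N. M i j u * (y j u - y i u))"

definition solution :: "(nat \<Rightarrow> real \<Rightarrow> real) \<Rightarrow> bool" where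
  "solution y \<longleftrightarrow> (\<forall>i\<in>{1..N}. \<forall>s t. 0 \<le> s \<longrightarrow> s \<le> t \<longrightarrow>
     (drift y i has_integral (y i t - y i s)) {s..t})"

lemma drift_affine: "drift (\<lambda>k u. c + e * y k u) i u = e * drift y i u"
  unfolding drift_def by (simp add: sum_distrib_left algebra_simps)

lemma solution_affine:
  assumes "solution y"
  shows "solution (\<lambda>k u. c + e * y k u)"
  unfolding solution_def drift_affine
proof (intro ballI allI impI)
  fix i and s t :: real assume "i \<in> {1..N}" "0 \<le> s" "s \<le> t"
  then have "((\<lambda>u. e * drift y i u) has_integral e * (y i t - y i s)) {s..t}"
    using assms unfolding solution_def by (intro has_integral_mult_right) blast
  then show "((\<lambda>u. e * drift y i u) has_integral (c + e * y i t) - (c + e * y i s)) {s..t}"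
    by (simp add: algebra_simps)
qed

lemma solution_integral:
  assumes "solution y" "i \<in> {1..N}" "0 \<le> s" "s \<le> t"
  shows "drift y i integrable_on {s..t}" "integral {s..t} (drift y i) = y i t - y i s"
proof -
  have "(drift y i has_integral (y i t - y i s)) {s..t}" using assms unfolding solution_def by blast
  then show "drift y i integrable_on {s..t}" "integral {s..t} (drift y i) = y i t - y i s"
    by (auto intro: has_integral_integrable integral_unique)
qed

lemma solution_continuous_on:
  assumes "solution y" "i \<in> {1..N}" "0 \<le> a"
  shows "continuous_on {a..b} (y i)"
proof (cases "a \<le> b")
  case True
  have "continuous_on {a..b} (\<lambda>t. y i a + integral {a..t} (drift y i))"
    using solution_integral(1)[OF assms True]
    by (intro continuous_intros indefinite_integral_continuous_1)
  then show ?thesis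
    by (rule continuous_on_eq) (use solution_integral(2)[OF assms(1-3)] in auto)
qed simp

(* Each summand is at least min 0 (y k u - y i u), and the summand k = i vanishes. *)
lemma drift_ge:
  assumes "0 \<le> u" "i \<in> {1..N}" "0 \<le> S" and below: "\<And>k. k \<in> {1..N} \<Longrightarrow> - S \<le> y k u - y i u"
  shows "- ((real N - 1) / real N) * S \<le> drift y i u"
proof -
  have term_ge: "- S \<le> M i k u * (y k u - y i u)" if "k \<in> {1..N}" for k
  proof (cases "0 \<le> y k u - y i u")
    case True
    then have "0 \<le> M i k u * (y k u - y i u)"
      using weight_range[OF assms(2) that assms(1)] by simp
    then show ?thesis using \<open>0 \<le> S\<close> by linarith
  next
    case False
    then have "1 * (y k u - y i u) \<le> M i k u * (y k u - y i u)"
      using weight_range[OF assms(2) that assms(1)] by (intro mult_right_mono_neg) auto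
    then show ?thesis using below[OF that] by simp
  qed
  have "- (real N - 1) * S = (\<Sum>k\<in>{1..N}-{i}. - S)"
    using \<open>i \<in> {1..N}\<close> by (simp add: of_nat_diff algebra_simps)
  also have "\<dots> \<le> (\<Sum>k\<in>{1..N}-{i}. M i k u * (y k u - y i u))"
    using term_ge by (intro sum_mono) auto
  also have "\<dots> = (\<Sum>k=1..N. M i k u * (y k u - y i u))"
    using \<open>i \<in> {1..N}\<close> by (simp add: sum.remove)
  finally have "- (real N - 1) * S \<le> (\<Sum>k=1..N. M i k u * (y k u - y i u))" .
  then have "(1 / real N) * (- (real N - 1) * S) \<le> drift y i u"
    unfolding drift_def by (intro mult_left_mono) auto
  moreover have "(1 / real N) * (- (real N - 1) * S) = - ((real N - 1) / real N) * S"
    by (cases "N = 0") (simp_all add: field_simps)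
  ultimately show ?thesis by simp
qed

lemma abs_drift_le_spread:
  assumes "0 \<le> u" "i \<in> {1..N}"
  shows "\<bar>drift y i u\<bar> \<le> ((real N - 1) / real N) * spread N y u"
proof -
  have N: "1 \<le> N" using assms(2) by simp
  have "- spread N y u \<le> y k u - y i u" "- spread N y u \<le> (0 + (-1) * y k u) - (0 + (-1) * y i u)"
    if "k \<in> {1..N}" for k
    using spread_ge[OF that assms(2), of y u] spread_ge[OF assms(2) that, of y u] by auto
  then have "- ((real N - 1) / real N) * spread N y u \<le> drift y i u"
    "- ((real N - 1) / real N) * spread N y u \<le> drift (\<lambda>k u. 0 + (-1) * y k u) i u"
    using assms by (blast intro: drift_ge spread_nonneg[OF N])+
  then show ?thesis unfolding drift_affine by simp
qed

lemma drift_ge_along_arrow: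
  assumes "0 \<le> u" "i \<in> {1..N}" "j \<in> {1..N}" and nonneg: "\<And>k. k \<in> {1..N} \<Longrightarrow> 0 \<le> y k u"
  shows "M i j u * y j u / real N - y i u \<le> drift y i u"
proof -
  have w: "0 \<le> M i k u \<and> M i k u \<le> 1" if "k \<in> {1..N}" for k
    using weight_range[OF assms(2) that assms(1)] .
  have N: "0 < real N" using \<open>i \<in> {1..N}\<close> by simp
  have "M i j u * y j u \<le> (\<Sum>k=1..N. M i k u * y k u)"
    using w nonneg by (intro member_le_sum[OF \<open>j \<in> {1..N}\<close>]) auto
  then have "M i j u * y j u / real N \<le> (\<Sum>k=1..N. M i k u * y k u) / real N"
    using N by (simp add: divide_right_mono)
  moreover have "(\<Sum>k=1..N. M i k u) * y i u \<le> real N * y i u"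
    using sum_bounded_above[of "{1..N}" "\<lambda>k. M i k u" 1] w nonneg[OF \<open>i \<in> {1..N}\<close>]
    by (intro mult_right_mono) auto
  then have "(\<Sum>k=1..N. M i k u) * y i u / real N \<le> y i u"
    using N by (simp add: pos_divide_le_eq mult.commute)
  moreover have "drift y i u = ((\<Sum>k=1..N. M i k u * y k u) - (\<Sum>k=1..N. M i k u) * y i u) / real N"
    unfolding drift_def by (simp add: right_diff_distrib sum_subtractf sum_distrib_right diff_divide_distrib)
  ultimately show ?thesis by (simp add: diff_divide_distrib)
qed

lemma neg_le_drift:
  assumes "0 \<le> u" "i \<in> {1..N}" and nonneg: "\<And>k. k \<in> {1..N} \<Longrightarrow> 0 \<le> y k u"
  shows "- y i u \<le> drift y i u"
proof -
  have "0 \<le> M i i u * y i u / real N"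
    using weight_range[OF assms(2,2,1)] nonneg[OF assms(2)] by simp
  moreover have "M i i u * y i u / real N - y i u \<le> drift y i u"
    by (rule drift_ge_along_arrow[OF assms(1,2,2)]) (rule nonneg)
  ultimately show ?thesis by linarith
qed

(* A component that is negative at u has left 0 at some r <= u and below 0 it sinks at rate
   at most B. *)
lemma lower_bound_halves:
  assumes sol: "solution y" and "0 \<le> a" and nonneg: "\<And>k. k \<in> {1..N} \<Longrightarrow> 0 \<le> y k a"
    and "0 \<le> B" and lower: "\<And>j v. j \<in> {1..N} \<Longrightarrow> a \<le> v \<Longrightarrow> v \<le> a + 1/2 \<Longrightarrow> - B \<le> y j v"
    and k: "k \<in> {1..N}" and u: "a \<le> u" "u \<le> a + 1/2"
  shows "- (B / 2) \<le> y k u"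
proof (cases "0 \<le> y k u")
  case False
  then have "y k u < 0" by simp
  then obtain r where r: "a \<le> r" "r \<le> u" "y k r = 0" "\<And>v. r \<le> v \<Longrightarrow> v \<le> u \<Longrightarrow> y k v \<le> 0"
    using last_zero_before_negative[OF u(1) solution_continuous_on[OF sol k \<open>0 \<le> a\<close>] nonneg[OF k]]
    by blast
  have "integral {r..u} (\<lambda>_. - B) \<le> integral {r..u} (drift y k)"
  proof (rule integral_le)
    show "drift y k integrable_on {r..u}"
      using solution_integral(1)[OF sol k _ r(2)] r(1) \<open>0 \<le> a\<close> by simp
    fix v assume v: "v \<in> {r..u}"
    have "- B \<le> y j v - y k v" if "j \<in> {1..N}" for j
    proof -
      have "a \<le> v" "v \<le> a + 1/2" using r(1) u v by auto
      then show ?thesis using lower[OF that] r(4)[of v] v by force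
    qed
    then have "- ((real N - 1) / real N) * B \<le> drift y k v"
      using v r(1) \<open>0 \<le> a\<close> \<open>0 \<le> B\<close> by (intro drift_ge[OF _ k]) auto
    moreover have "((real N - 1) / real N) * B \<le> B"
      using \<open>0 \<le> B\<close> k by (intro mult_left_le_one_le) (auto simp: field_simps)
    ultimately show "- B \<le> drift y k v" by linarith
  qed auto
  then have "- B * (u - r) \<le> y k u"
    using solution_integral(2)[OF sol k _ r(2)] r(1-3) \<open>0 \<le> a\<close> by (simp add: mult.commute)
  moreover have "- B * (1/2) \<le> - B * (u - r)"
    using r u \<open>0 \<le> B\<close> by (intro mult_left_mono_neg) auto
  ultimately show ?thesis by simp
qed (use \<open>0 \<le> B\<close> in simp)

(* Apply lower_bound_halves to the largest value B of the - y k on the window: B <= B / 2. *)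
lemma nonneg_on_half_interval:
  assumes sol: "solution y" and "0 \<le> a" and nonneg: "\<And>k. k \<in> {1..N} \<Longrightarrow> 0 \<le> y k a"
    and "i \<in> {1..N}" "a \<le> t" "t \<le> a + 1/2"
  shows "0 \<le> y i t"
proof -
  let ?K = "insert 0 (\<Union>k\<in>{1..N}. (\<lambda>u. - y k u) ` {a..a + 1/2})"
  have "compact ?K"
    using solution_continuous_on[OF sol _ \<open>0 \<le> a\<close>]
    by (intro compact_insert compact_UN compact_continuous_image continuous_intros) auto
  then obtain B where "B \<in> ?K" and B_max: "\<And>z. z \<in> ?K \<Longrightarrow> z \<le> B"
    using compact_attains_sup[of ?K] by blast
  then have "0 \<le> B" by blast
  have in_K: "- y k u \<in> ?K" if "k \<in> {1..N}" "a \<le> u" "u \<le> a + 1/2" for k u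
    using that by (intro insertI2 UN_I rev_image_eqI) auto
  have lower: "- B \<le> y k u" if "k \<in> {1..N}" "a \<le> u" "u \<le> a + 1/2" for k u
    using B_max[OF in_K[OF that]] by simp
  have half: "- (B / 2) \<le> y k u" if "k \<in> {1..N}" "a \<le> u" "u \<le> a + 1/2" for k u
    by (rule lower_bound_halves[OF sol \<open>0 \<le> a\<close> nonneg \<open>0 \<le> B\<close> lower that])
  from \<open>B \<in> ?K\<close> consider "B = 0" | k u where "k \<in> {1..N}" "u \<in> {a..a + 1/2}" "B = - y k u"
    by auto
  then have "B \<le> 0"
  proof cases
    case (2 k u)
    then show ?thesis using half[of k u] by simp
  qed simp
  then show ?thesis using B_max[OF in_K[OF assms(4-6)]] by linarith
qed

lemma nonneg_preserved:
  assumes sol: "solution y" and "0 \<le> a" and nonneg: "\<And>k. k \<in> {1..N} \<Longrightarrow> 0 \<le> y k a"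
    and "i \<in> {1..N}" "a \<le> t"
  shows "0 \<le> y i t"
proof -
  have nonneg_n: "\<forall>k\<in>{1..N}. \<forall>u\<in>{a..a + real n / 2}. 0 \<le> y k u" for n
  proof (induction n)
    case (Suc n)
    have "0 \<le> y k u" if "k \<in> {1..N}" "u \<in> {a..a + real (Suc n) / 2}" for k u
    proof (cases "u \<le> a + real n / 2")
      case False
      have "u \<le> a + real n / 2 + 1/2" using that(2) by (simp add: add_divide_distrib)
      with Suc \<open>0 \<le> a\<close> False show ?thesis
        by (intro nonneg_on_half_interval[OF sol _ _ that(1), of "a + real n / 2"]) auto
    qed (use Suc that in auto)
    then show ?case by blast
  qed (use nonneg in auto)
  obtain n :: nat where "2 * (t - a) \<le> real n"
    using real_arch_simple by blast
  then have "t \<in> {a..a + real n / 2}" using \<open>a \<le> t\<close> by simp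
  then show ?thesis using nonneg_n assms(4) by blast
qed

lemma bounds_preserved:
  assumes sol: "solution y" and "0 \<le> a" and bounds: "\<And>k. k \<in> {1..N} \<Longrightarrow> lo \<le> y k a \<and> y k a \<le> hi"
    and "i \<in> {1..N}" "a \<le> t"
  shows "lo \<le> y i t \<and> y i t \<le> hi"
proof -
  have "0 \<le> - lo + 1 * y i t"
    by (rule nonneg_preserved[OF solution_affine[OF sol] assms(2) _ assms(4,5)]) (simp add: bounds)
  moreover have "0 \<le> hi + (-1) * y i t"
    by (rule nonneg_preserved[OF solution_affine[OF sol] assms(2) _ assms(4,5)]) (simp add: bounds)
  ultimately show ?thesis by simp
qed

lemma spread_antimono:
  assumes sol: "solution y" and "1 \<le> N" "0 \<le> s" "s \<le> t"
  shows "spread N y t \<le> spread N y s"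
proof -
  obtain lo hi where bounds: "\<And>k. k \<in> {1..N} \<Longrightarrow> lo \<le> y k s \<and> y k s \<le> hi"
    and spread_eq: "spread N y s = hi - lo"
    using spread_bounds[OF \<open>1 \<le> N\<close>, of y s] by blast
  have "y k t - y l t \<le> hi - lo" if "k \<in> {1..N}" "l \<in> {1..N}" for k l
    using bounds_preserved[OF sol \<open>0 \<le> s\<close> bounds that(1) \<open>s \<le> t\<close>]
      bounds_preserved[OF sol \<open>0 \<le> s\<close> bounds that(2) \<open>s \<le> t\<close>] by linarith
  then show ?thesis unfolding spread_le_iff[OF \<open>1 \<le> N\<close>] spread_eq by blast
qed

lemma exp_decay_lower_bound:
  assumes sol: "solution y" and "0 \<le> r" and nonneg: "\<And>k. k \<in> {1..N} \<Longrightarrow> 0 \<le> y k r"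
    and i: "i \<in> {1..N}" and "r \<le> t"
  shows "exp (- (t - r)) * y i r \<le> y i t"
proof -
  have "exp (- 1 * (t - r)) * y i r \<le> y i t"
  proof (rule gronwall_lower_bound[OF \<open>r \<le> t\<close>])
    show "continuous_on {r..t} (y i)" by (rule solution_continuous_on[OF sol i \<open>0 \<le> r\<close>])
    fix r' t' assume rt: "r \<le> r'" "r' \<le> t'" "t' \<le> t"
    have "integral {r'..t'} (\<lambda>u. - y i u) \<le> integral {r'..t'} (drift y i)"
    proof (rule integral_le)
      show "drift y i integrable_on {r'..t'}"
        using solution_integral(1)[OF sol i _ rt(2)] rt \<open>0 \<le> r\<close> by simp
      show "(\<lambda>u. - y i u) integrable_on {r'..t'}"
        using solution_continuous_on[OF sol i, of r' t'] rt \<open>0 \<le> r\<close>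
        by (intro integrable_continuous_interval continuous_intros) auto
      fix u assume "u \<in> {r'..t'}"
      then show "- y i u \<le> drift y i u"
        using rt \<open>0 \<le> r\<close> by (intro neg_le_drift[OF _ i] nonneg_preserved[OF sol \<open>0 \<le> r\<close> nonneg]) auto
    qed
    then show "- 1 * integral {r'..t'} (y i) \<le> y i t' - y i r'"
      using solution_integral(2)[OF sol i _ rt(2)] rt \<open>0 \<le> r\<close> by (simp add: integral_neg)
  qed simp
  then show ?thesis by simp
qed

lemma integral_window_le:
  assumes sol: "solution y" and "0 \<le> s" and nonneg: "\<And>k. k \<in> {1..N} \<Longrightarrow> 0 \<le> y k s"
    and i: "i \<in> {1..N}" and "0 \<le> T"
  shows "integral {s..s + T} (y i) \<le> y i (s + T) * (exp T - 1)"
proof -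
  let ?Z = "y i (s + T)"
  have "integral {s..s + T} (y i) \<le> integral {s..s + T} (\<lambda>u. ?Z * exp (s + T - u))"
  proof (rule integral_le)
    show "y i integrable_on {s..s + T}"
      using solution_continuous_on[OF sol i \<open>0 \<le> s\<close>] by (rule integrable_continuous_interval)
    show "(\<lambda>u. ?Z * exp (s + T - u)) integrable_on {s..s + T}"
      by (intro integrable_continuous_interval continuous_intros)
    fix u assume "u \<in> {s..s + T}"
    then have "exp (- (s + T - u)) * y i u \<le> ?Z"
      using \<open>0 \<le> s\<close> nonneg_preserved[OF sol \<open>0 \<le> s\<close> nonneg]
      by (intro exp_decay_lower_bound[OF sol _ _ i]) auto
    then have "exp (s + T - u) * (exp (- (s + T - u)) * y i u) \<le> ?Z * exp (s + T - u)"
      by (simp add: mult.commute)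
    then show "y i u \<le> ?Z * exp (s + T - u)"
      by (simp add: mult.assoc[symmetric] exp_add[symmetric])
  qed
  also have "\<dots> = ?Z * (exp (s + T - s) - 1)"
    using \<open>0 \<le> T\<close> by (intro integral_unique has_integral_mult_right has_integral_exp_reverse) simp
  finally show ?thesis by simp
qed

(* Over the window agent j pulls agent i up by at least B mu T / N, while by
   integral_window_le agent i loses at most y i (s + T) (exp T - 1). *)
lemma arrow_lower_bound:
  assumes sol: "solution y" and "0 \<le> s" and nonneg: "\<And>k. k \<in> {1..N} \<Longrightarrow> 0 \<le> y k s"
    and i: "i \<in> {1..N}" and j: "j \<in> {1..N}" and "0 < T" "0 \<le> B"
    and M_int: "M i j integrable_on {s..s + T}" and M_ge: "\<mu> * T \<le> integral {s..s + T} (M i j)"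
    and y_j: "\<And>u. u \<in> {s..s + T} \<Longrightarrow> B \<le> y j u"
  shows "exp (- T) * (B * (\<mu> * T) / real N) \<le> y i (s + T)"
proof -
  let ?Z = "y i (s + T)"
  have N: "0 < real N" using i by simp
  have y_nonneg: "0 \<le> y k u" if "k \<in> {1..N}" "s \<le> u" for k u
    by (rule nonneg_preserved[OF sol \<open>0 \<le> s\<close> nonneg that])
  have y_int: "y i integrable_on {s..s + T}"
    using solution_continuous_on[OF sol i \<open>0 \<le> s\<close>] by (rule integrable_continuous_interval)
  have BM_int: "(\<lambda>u. B / real N * M i j u) integrable_on {s..s + T}"
    using M_int by (rule integrable_on_mult_right)
  have "integral {s..s + T} (\<lambda>u. B / real N * M i j u - y i u) \<le> integral {s..s + T} (drift y i)"
  proof (rule integral_le)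
    show "drift y i integrable_on {s..s + T}"
      using solution_integral(1)[OF sol i \<open>0 \<le> s\<close>] \<open>0 < T\<close> by simp
    show "(\<lambda>u. B / real N * M i j u - y i u) integrable_on {s..s + T}"
      using BM_int y_int by (rule integrable_diff)
    fix u assume u: "u \<in> {s..s + T}"
    then have "M i j u * B \<le> M i j u * y j u"
      using weight_range[OF i j, of u] y_j[OF u] \<open>0 \<le> s\<close> by (intro mult_left_mono) auto
    then have "B / real N * M i j u \<le> M i j u * y j u / real N"
      using N by (simp add: divide_right_mono mult.commute)
    then show "B / real N * M i j u - y i u \<le> drift y i u"
      using drift_ge_along_arrow[OF _ i j, of u y] y_nonneg u \<open>0 \<le> s\<close> by force
  qed
  also have "\<dots> = ?Z - y i s"
    using solution_integral(2)[OF sol i \<open>0 \<le> s\<close>] \<open>0 < T\<close> by simp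
  finally have "B / real N * integral {s..s + T} (M i j) - integral {s..s + T} (y i) \<le> ?Z"
    using integral_diff[OF BM_int y_int] y_nonneg[OF i order_refl] by simp
  moreover have "B / real N * (\<mu> * T) \<le> B / real N * integral {s..s + T} (M i j)"
    using M_ge \<open>0 \<le> B\<close> N by (intro mult_left_mono) auto
  ultimately have "B * (\<mu> * T) / real N \<le> ?Z * exp T"
    using integral_window_le[OF sol \<open>0 \<le> s\<close> nonneg i, of T] \<open>0 < T\<close> by (simp add: algebra_simps)
  then have "exp (- T) * (B * (\<mu> * T) / real N) \<le> exp (- T) * (?Z * exp T)"
    by (intro mult_left_mono) auto
  also have "exp (- T) * (?Z * exp T) = ?Z" by (simp add: exp_minus)
  finally show ?thesis .
qed

lemma spread_increment_ge:
  assumes sol: "solution y" and "1 \<le> N" "0 \<le> r" "r \<le> t"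
  shows "- (2 * ((real N - 1) / real N)) * integral {r..t} (spread N y) \<le> spread N y t - spread N y r"
proof -
  define c where "c = (real N - 1) / real N"
  obtain i j where ij: "i \<in> {1..N}" "j \<in> {1..N}" "spread N y r = y i r - y j r"
    using spread_attained[OF \<open>1 \<le> N\<close>] by blast
  have sp_int: "spread N y integrable_on {r..t}"
    using solution_continuous_on[OF sol _ \<open>0 \<le> r\<close>] \<open>1 \<le> N\<close>
    by (intro integrable_continuous_interval continuous_on_spread) auto
  have drift_int: "drift y k integrable_on {r..t}" "integral {r..t} (drift y k) = y k t - y k r"
    if "k \<in> {1..N}" for k
    using solution_integral[OF sol that \<open>0 \<le> r\<close> \<open>r \<le> t\<close>] by auto
  have "integral {r..t} (\<lambda>u. - (2 * c) * spread N y u) \<le> integral {r..t} (\<lambda>u. drift y i u - drift y j u)"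
  proof (rule integral_le)
    show "(\<lambda>u. - (2 * c) * spread N y u) integrable_on {r..t}"
      using sp_int by (rule integrable_on_mult_right)
    show "(\<lambda>u. drift y i u - drift y j u) integrable_on {r..t}"
      using drift_int(1)[OF ij(1)] drift_int(1)[OF ij(2)] by (rule integrable_diff)
    fix u assume "u \<in> {r..t}"
    then have "0 \<le> u" using \<open>0 \<le> r\<close> by simp
    have "- (2 * c) * spread N y u = - (c * spread N y u) - c * spread N y u"
      by (simp add: algebra_simps)
    then show "- (2 * c) * spread N y u \<le> drift y i u - drift y j u"
      using abs_drift_le_spread[OF \<open>0 \<le> u\<close> ij(1), of y, unfolded abs_le_iff, folded c_def]
        abs_drift_le_spread[OF \<open>0 \<le> u\<close> ij(2), of y, unfolded abs_le_iff, folded c_def] by linarith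
  qed
  also have "\<dots> = (y i t - y i r) - (y j t - y j r)"
    using integral_diff[OF drift_int(1)[OF ij(1)] drift_int(1)[OF ij(2)]] drift_int(2) ij by simp
  also have "\<dots> \<le> spread N y t - spread N y r"
    using spread_ge[OF ij(1,2), of y t] ij(3) by simp
  finally show ?thesis unfolding c_def by (simp add: integral_mult_right)
qed

lemma spread_growth_bound:
  assumes sol: "solution y" and "2 \<le> N" "0 \<le> s" "s \<le> t"
  shows "spread N y s \<le> exp (2 * ((real N - 1) / real N) * (t - s)) * spread N y t"
proof -
  define c where "c = 2 * ((real N - 1) / real N)"
  have "exp (- c * (t - s)) * spread N y s \<le> spread N y t"
  proof (rule gronwall_lower_bound[OF \<open>s \<le> t\<close>])
    show "0 < c" unfolding c_def using \<open>2 \<le> N\<close> by simp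
    show "continuous_on {s..t} (spread N y)"
      using solution_continuous_on[OF sol _ \<open>0 \<le> s\<close>] \<open>2 \<le> N\<close> by (intro continuous_on_spread) auto
    fix r t' assume "s \<le> r" "r \<le> t'" "t' \<le> t"
    then show "- c * integral {r..t'} (spread N y) \<le> spread N y t' - spread N y r"
      unfolding c_def using \<open>0 \<le> s\<close> \<open>2 \<le> N\<close> by (intro spread_increment_ge[OF sol]) auto
  qed
  then have "exp (c * (t - s)) * (exp (- c * (t - s)) * spread N y s) \<le> exp (c * (t - s)) * spread N y t"
    by (intro mult_left_mono) auto
  then show ?thesis unfolding c_def by (simp add: mult.assoc[symmetric] exp_add[symmetric])
qed

lemma solution_inner:
  fixes x :: "nat \<Rightarrow> real \<Rightarrow> 'a::real_inner"
  assumes sol: "\<forall>i\<in>{1..N}. \<forall>t\<ge>0.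
    ((\<lambda>s. (1 / real N) *\<^sub>R (\<Sum>j=1..N. M i j s *\<^sub>R (x j s - x i s))) has_integral (x i t - x i 0)) {0..t}"
  shows "solution (\<lambda>k u. x k u \<bullet> v)"
  unfolding solution_def
proof (intro ballI allI impI)
  fix i and s t :: real assume i: "i \<in> {1..N}" and "0 \<le> s" "s \<le> t"
  let ?g = "drift (\<lambda>k u. x k u \<bullet> v) i"
  have "(\<lambda>s. ((1 / real N) *\<^sub>R (\<Sum>j=1..N. M i j s *\<^sub>R (x j s - x i s))) \<bullet> v) = ?g"
    unfolding drift_def by (simp add: inner_sum_left inner_diff_left)
  then have g0: "(?g has_integral x i r \<bullet> v - x i 0 \<bullet> v) {0..r}" if "0 \<le> r" for r
    using has_integral_linear[OF sol[rule_format, OF i that] bounded_linear_inner_left, of v]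
    by (simp add: o_def inner_diff_left)
  have int_t: "?g integrable_on {0..t}"
    using g0[of t] \<open>0 \<le> s\<close> \<open>s \<le> t\<close> by (auto intro: has_integral_integrable)
  have "integral {0..s} ?g + integral {s..t} ?g = integral {0..t} ?g"
    by (rule Henstock_Kurzweil_Integration.integral_combine[OF \<open>0 \<le> s\<close> \<open>s \<le> t\<close> int_t])
  then have "integral {s..t} ?g = x i t \<bullet> v - x i s \<bullet> v"
    using integral_unique[OF g0[of s]] integral_unique[OF g0[of t]] \<open>0 \<le> s\<close> \<open>s \<le> t\<close> by simp
  moreover have "?g integrable_on {s..t}"
    using \<open>0 \<le> s\<close> by (intro integrable_subinterval_real[OF int_t]) auto
  ultimately show "(?g has_integral x i t \<bullet> v - x i s \<bullet> v) {s..t}"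
    by (metis has_integral_integrable_integral)
qed

lemma diameter_antimono:
  fixes x :: "nat \<Rightarrow> real \<Rightarrow> 'a::real_inner"
  assumes "\<And>v. solution (\<lambda>k u. x k u \<bullet> v)" "1 \<le> N" "0 \<le> s" "s \<le> t"
  shows "diameter N x t \<le> diameter N x s"
  using diameter_le_of_spread_le[of N 1 x t s] spread_antimono assms by simp

lemma diameter_growth_bound:
  fixes x :: "nat \<Rightarrow> real \<Rightarrow> 'a::real_inner"
  assumes "\<And>v. solution (\<lambda>k u. x k u \<bullet> v)" "2 \<le> N" "0 \<le> s" "s \<le> t"
  shows "diameter N x s \<le> exp (2 * ((real N - 1) / real N) * (t - s)) * diameter N x t"
  using assms by (intro diameter_le_of_spread_le spread_growth_bound) auto

end

locale persistent_graph = consensus_system +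
  fixes T \<mu> :: real and E :: "(nat \<times> nat) set" and I :: nat
  assumes T_pos: "0 < T" and mu_pos: "0 < \<mu>"
    and arrows_in: "E \<subseteq> {1..N} \<times> {1..N}"
    and arrows_persistent: "\<And>k i j. (i, j) \<in> E \<Longrightarrow> conn_arrow T \<mu> M (real k * T) i j"
    and I_reachable: "globally_reachable N E I"
begin

lemma I_node: "I \<in> {1..N}"
  using I_reachable unfolding globally_reachable_def by blast

lemma persistent_arrow_lower_bound:
  assumes sol: "solution y" and nonneg: "\<And>k. k \<in> {1..N} \<Longrightarrow> 0 \<le> y k (real m * T)"
    and "(i, j) \<in> E" "0 \<le> A" "0 \<le> q" "q \<le> \<mu> * T / real N"
    and y_j: "\<And>u. real m * T \<le> u \<Longrightarrow> A * exp (- (u - real m * T)) \<le> y j u"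
    and "real m * T + T \<le> t"
  shows "A * (q * exp (- T)) * exp (- (t - real m * T)) \<le> y i t"
proof -
  let ?s = "real m * T"
  have "0 \<le> ?s" using T_pos by simp
  have i: "i \<in> {1..N}" and j: "j \<in> {1..N}" using \<open>(i, j) \<in> E\<close> arrows_in by auto
  have "exp (- T) * (A * exp (- T) * (\<mu> * T) / real N) \<le> y i (?s + T)"
  proof (rule arrow_lower_bound[OF sol \<open>0 \<le> ?s\<close> nonneg i j T_pos])
    show "0 \<le> A * exp (- T)" using \<open>0 \<le> A\<close> by simp
    show "\<mu> * T \<le> integral {?s..?s + T} (M i j)" "M i j integrable_on {?s..?s + T}"
      by (rule conn_arrow_integral[OF arrows_persistent[OF \<open>(i, j) \<in> E\<close>] T_pos mu_pos])+
    fix u assume u: "u \<in> {?s..?s + T}"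
    then have "A * exp (- T) \<le> A * exp (- (u - ?s))" using \<open>0 \<le> A\<close> by (intro mult_left_mono) auto
    also have "\<dots> \<le> y j u" using y_j u by simp
    finally show "A * exp (- T) \<le> y j u" .
  qed
  moreover have "A * exp (- T) * q \<le> A * exp (- T) * (\<mu> * T) / real N"
    using mult_left_mono[OF \<open>q \<le> \<mu> * T / real N\<close>, of "A * exp (- T)"] \<open>0 \<le> A\<close> by simp
  ultimately have "exp (- T) * (A * exp (- T) * q) \<le> y i (?s + T)"
    by (smt (verit) exp_gt_zero mult_left_mono)
  then have "exp (- (t - (?s + T))) * (exp (- T) * (A * exp (- T) * q))
      \<le> exp (- (t - (?s + T))) * y i (?s + T)"
    by (intro mult_left_mono) auto
  also have "\<dots> \<le> y i t"
    using \<open>?s + T \<le> t\<close> \<open>0 \<le> ?s\<close> T_pos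
    by (intro exp_decay_lower_bound[OF sol _ _ i] nonneg_preserved[OF sol \<open>0 \<le> ?s\<close> nonneg]) auto
  finally show ?thesis by (simp add: algebra_simps flip: exp_add)
qed

lemma path_lower_bound:
  assumes sol: "solution y" and nonneg: "\<And>k. k \<in> {1..N} \<Longrightarrow> 0 \<le> y k (real m * T)"
    and "0 \<le> h" "h \<le> y I (real m * T)" and "0 \<le> q" "q \<le> \<mu> * T / real N"
    and "(i, I) \<in> E ^^ n" "real m * T + real n * T \<le> t"
  shows "h * (q * exp (- T)) ^ n * exp (- (t - real m * T)) \<le> y i t"
proof -
  let ?t0 = "real m * T"
  have "0 \<le> ?t0" using T_pos by simp
  show ?thesis
    using assms(7,8)
  proof (induction n arbitrary: i t)
    case 0
    then have "i = I" "?t0 \<le> t" by auto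
    then have "exp (- (t - ?t0)) * h \<le> y i t"
      using exp_decay_lower_bound[OF sol \<open>0 \<le> ?t0\<close> nonneg I_node, of t] assms(4)
      by (smt (verit) exp_gt_zero mult_left_mono)
    then show ?case by (simp add: mult.commute)
  next
    case (Suc n)
    obtain j where "(i, j) \<in> E" and "(j, I) \<in> E ^^ n"
      using relpow_Suc_D2[OF Suc.prems(1)] by blast
    let ?s = "real (m + n) * T"
    let ?A = "h * (q * exp (- T)) ^ n * exp (- (?s - ?t0))"
    have "?A * (q * exp (- T)) * exp (- (t - ?s)) \<le> y i t"
    proof (rule persistent_arrow_lower_bound[OF sol _ \<open>(i, j) \<in> E\<close> _ assms(5,6)])
      show "0 \<le> y k ?s" if "k \<in> {1..N}" for k
        using T_pos by (intro nonneg_preserved[OF sol \<open>0 \<le> ?t0\<close> nonneg that] mult_right_mono) auto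
      show "0 \<le> ?A" using \<open>0 \<le> h\<close> \<open>0 \<le> q\<close> by simp
      show "?s + T \<le> t" using Suc.prems(2) by (simp add: algebra_simps)
      fix u assume "?s \<le> u"
      then have "h * (q * exp (- T)) ^ n * exp (- (u - ?t0)) \<le> y j u"
        using Suc.IH[OF \<open>(j, I) \<in> E ^^ n\<close>] by (simp add: algebra_simps)
      then show "?A * exp (- (u - ?s)) \<le> y j u"
        by (simp add: mult.assoc flip: exp_add)
    qed
    moreover have "exp (- (?s - ?t0)) * exp (- (t - ?s)) = exp (- (t - ?t0))"
      by (simp flip: exp_add)
    ultimately show ?case
      by (metis (no_types, lifting) power_Suc2 mult.assoc mult.commute)
  qed
qed

lemma reachable_lower_bound:
  assumes sol: "solution y" and nonneg: "\<And>k. k \<in> {1..N} \<Longrightarrow> 0 \<le> y k (real m * T)"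
    and "0 \<le> h" "h \<le> y I (real m * T)" and "0 \<le> q" "q \<le> 1" "q \<le> \<mu> * T / real N"
    and i: "i \<in> {1..N}"
  defines "d \<equiv> graph_length N E I"
  shows "h * q ^ d * exp (- 2 * real d * T) \<le> y i (real m * T + real d * T)"
proof -
  define n where "n = path_dist E i I"
  have "n \<le> d" unfolding n_def d_def by (rule path_dist_le_graph_length[OF i])
  have "(i, I) \<in> E ^^ n"
    unfolding n_def using I_reachable i by (intro path_dist_relpow) (auto simp: globally_reachable_def)
  have "q * exp (- T) \<le> 1" using \<open>0 \<le> q\<close> \<open>q \<le> 1\<close> T_pos by (intro mult_le_one) auto
  have "h * q ^ d * exp (- 2 * real d * T) = h * (q * exp (- T)) ^ d * exp (- (real d * T))"
    by (simp add: power_mult_distrib mult.assoc flip: exp_of_nat_mult exp_add)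
  also have "\<dots> \<le> h * (q * exp (- T)) ^ n * exp (- (real d * T))"
    using \<open>n \<le> d\<close> \<open>q * exp (- T) \<le> 1\<close> \<open>0 \<le> h\<close> \<open>0 \<le> q\<close>
    by (intro mult_right_mono mult_left_mono power_decreasing) auto
  also have "\<dots> \<le> y i (real m * T + real d * T)"
    using path_lower_bound[OF sol nonneg assms(3-5,7) \<open>(i, I) \<in> E ^^ n\<close>, of "real m * T + real d * T"]
      \<open>n \<le> d\<close> T_pos
    by (simp add: mult_right_mono)
  finally show ?thesis .
qed

(* A reference node in the lower half of [lo, hi] drags every agent a definite distance
   below hi. *)
lemma contraction_if_reference_low:
  assumes sol: "solution y"
    and bounds: "\<And>k. k \<in> {1..N} \<Longrightarrow> lo \<le> y k (real m * T) \<and> y k (real m * T) \<le> hi"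
    and low: "y I (real m * T) \<le> (lo + hi) / 2"
    and "0 \<le> q" "q \<le> 1" "q \<le> \<mu> * T / real N" and k: "k \<in> {1..N}" and l: "l \<in> {1..N}"
  defines "d \<equiv> graph_length N E I"
  shows "y k (real m * T + real d * T) - y l (real m * T + real d * T)
    \<le> (1 - q ^ d * exp (- 2 * real d * T) / 2) * (hi - lo)"
proof -
  let ?t1 = "real m * T + real d * T"
  have "0 \<le> real m * T" using T_pos by simp
  have "lo \<le> hi" using bounds[OF I_node] by simp
  have "(hi - lo) / 2 * q ^ d * exp (- 2 * real d * T) \<le> hi + (-1) * y k ?t1"
    unfolding d_def
    by (rule reachable_lower_bound[OF solution_affine[OF sol] _ _ _ \<open>0 \<le> q\<close> \<open>q \<le> 1\<close> _ k])
      (use bounds low \<open>lo \<le> hi\<close> assms(6) in auto)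
  moreover have "lo \<le> y l ?t1"
    using bounds_preserved[OF sol \<open>0 \<le> real m * T\<close> bounds l] T_pos by simp
  ultimately show ?thesis by (simp add: algebra_simps)
qed

lemma spread_contraction:
  assumes sol: "solution y" and "0 \<le> q" "q \<le> 1" "q \<le> \<mu> * T / real N"
  defines "d \<equiv> graph_length N E I"
  shows "spread N y (real m * T + real d * T) \<le> (1 - q ^ d * exp (- 2 * real d * T) / 2) * spread N y (real m * T)"
proof -
  let ?t0 = "real m * T" and ?t1 = "real m * T + real d * T"
  have "1 \<le> N" using I_node by simp
  obtain lo hi where bounds: "\<And>k. k \<in> {1..N} \<Longrightarrow> lo \<le> y k ?t0 \<and> y k ?t0 \<le> hi"
    and spread_eq: "spread N y ?t0 = hi - lo"
    using spread_bounds[OF \<open>1 \<le> N\<close>, of y ?t0] by blast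
  have "y k ?t1 - y l ?t1 \<le> (1 - q ^ d * exp (- 2 * real d * T) / 2) * (hi - lo)"
    if "k \<in> {1..N}" "l \<in> {1..N}" for k l
  proof (cases "y I ?t0 \<le> (lo + hi) / 2")
    case True
    show ?thesis
      using contraction_if_reference_low[OF sol bounds True assms(2-4) that] unfolding d_def .
  next
    case False
    have "(0 + (-1) * y l ?t1) - (0 + (-1) * y k ?t1) \<le> (1 - q ^ d * exp (- 2 * real d * T) / 2) * (- lo - - hi)"
      unfolding d_def
      by (rule contraction_if_reference_low[OF solution_affine[OF sol] _ _ assms(2-4) that(2,1)])
        (use bounds False in auto)
    then show ?thesis by simp
  qed
  then show ?thesis unfolding spread_le_iff[OF \<open>1 \<le> N\<close>] spread_eq by blast
qed

lemma diameter_geometric_decay: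
  fixes x :: "nat \<Rightarrow> real \<Rightarrow> 'a::real_inner"
  assumes proj: "\<And>v. solution (\<lambda>k u. x k u \<bullet> v)"
  defines "C \<equiv> 1 - (1/2) * (\<mu> * T / (real N + \<mu> * T)) ^ graph_length N E I
    * exp (- 2 * real (graph_length N E I) * T)"
  shows "diameter N x (real n * (real (graph_length N E I) * T)) \<le> C ^ n * diameter N x 0"
proof (induction n)
  case (Suc n)
  define d where "d = graph_length N E I"
  define q where "q = \<mu> * T / (real N + \<mu> * T)"
  have "1 \<le> N" using I_node by simp
  have "0 < \<mu> * T" using mu_pos T_pos by simp
  then have q: "0 \<le> q" "q \<le> 1" "q \<le> \<mu> * T / real N"
    unfolding q_def using \<open>1 \<le> N\<close> by (auto simp: divide_left_mono)
  then have "q ^ d * exp (- 2 * real d * T) \<le> 1"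
    using T_pos by (intro mult_le_one power_le_one) auto
  then have "0 \<le> C" unfolding C_def q_def d_def by simp
  have "real (n * d) * T + real d * T = real (Suc n) * (real d * T)"
    by (simp add: algebra_simps)
  then have "diameter N x (real (Suc n) * (real d * T)) \<le> C * diameter N x (real n * (real d * T))"
    using spread_contraction[OF proj q, where m = "n * d"] \<open>1 \<le> N\<close> \<open>0 \<le> C\<close>
    unfolding C_def q_def d_def by (intro diameter_le_of_spread_le) (auto simp: algebra_simps)
  also have "\<dots> \<le> C * (C ^ n * diameter N x 0)"
    using Suc \<open>0 \<le> C\<close> unfolding d_def by (rule mult_left_mono)
  finally show ?case unfolding d_def by (simp add: mult.assoc)
qed simp

end

theorem theorem1:
  fixes N :: nat and M :: "nat \<Rightarrow> nat \<Rightarrow> real \<Rightarrow> real"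
    and x :: "nat \<Rightarrow> real \<Rightarrow> 'a::euclidean_space"
    and T \<mu> :: real and E :: "(nat \<times> nat) set" and I :: nat
    and \<tau> C \<delta> :: real and \<phi> :: "real \<Rightarrow> real"
  assumes N2: "N \<ge> 2"
    and meas: "\<forall>i\<in>{1..N}. \<forall>j\<in>{1..N}. M i j \<in> borel_measurable (restrict_space lebesgue {0..})"
    and range: "\<forall>i\<in>{1..N}. \<forall>j\<in>{1..N}. \<forall>t\<ge>0. 0 \<le> M i j t \<and> M i j t \<le> 1"
    and sol: "\<forall>i\<in>{1..N}. \<forall>t\<ge>0.
       ((\<lambda>s. (1 / real N) *\<^sub>R (\<Sum>j=1..N. M i j s *\<^sub>R (x j s - x i s))) has_integral (x i t - x i 0)) {0..t}"
    and T: "T > 0" and mu: "\<mu> > 0"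
    and E: "E \<subseteq> {1..N} \<times> {1..N}"
    and Econn: "\<forall>k::nat. \<forall>(i, j)\<in>E. conn_arrow T \<mu> M (real k * T) i j"
    and reach: "globally_reachable N E I"
    and tau_def: "\<tau> = real (graph_length N E I) * T"
    and C_def: "C = 1 - (1/2) * (\<mu> * T / (real N + \<mu> * T)) ^ graph_length N E I
                       * exp (- 2 * real (graph_length N E I) * T)"
    and delta_def: "\<delta> = - (real N / (2 * (real N - 1))) * ln C"
    and phi_def: "\<phi> = (\<lambda>t. if t \<le> \<tau> - \<delta> then 1
                      else C * exp (2 * ((real N - 1) / real N) * (\<tau> - t)))"
  shows "(\<forall>n::nat. diameter N x (real n * \<tau>) \<le> C ^ n * diameter N x 0)
    \<and> (\<forall>n::nat. \<forall>t. 0 \<le> t \<and> t \<le> \<tau> \<longrightarrow>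
           diameter N x (real n * \<tau> + t) \<le> \<phi> t * C ^ n * diameter N x 0)"
proof -
  interpret persistent_graph N M T \<mu> E I
    using range T mu E Econn reach by unfold_locales auto
  have proj: "solution (\<lambda>k u. x k u \<bullet> v)" for v by (rule solution_inner[OF sol])
  have "1 \<le> N" "0 \<le> \<tau>" using N2 T by (auto simp: tau_def)
  have decay: "diameter N x (real n * \<tau>) \<le> C ^ n * diameter N x 0" for n
    using diameter_geometric_decay[OF proj] unfolding tau_def C_def .
  have "diameter N x (real n * \<tau> + t) \<le> \<phi> t * C ^ n * diameter N x 0" if "0 \<le> t" "t \<le> \<tau>" for n t
  proof (cases "t \<le> \<tau> - \<delta>")
    case True
    have "diameter N x (real n * \<tau> + t) \<le> diameter N x (real n * \<tau>)"
      using that \<open>0 \<le> \<tau>\<close> by (intro diameter_antimono[OF proj \<open>1 \<le> N\<close>]) auto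
    with decay[of n] True show ?thesis by (simp add: phi_def)
  next
    case False
    have "diameter N x (real n * \<tau> + t)
        \<le> exp (2 * ((real N - 1) / real N) * (\<tau> - t)) * diameter N x (real (Suc n) * \<tau>)"
      using diameter_growth_bound[OF proj N2, of "real n * \<tau> + t" "real (Suc n) * \<tau>"] that \<open>0 \<le> \<tau>\<close>
      by (simp add: algebra_simps)
    also have "\<dots> \<le> exp (2 * ((real N - 1) / real N) * (\<tau> - t)) * (C ^ Suc n * diameter N x 0)"
      using decay[of "Suc n"] by (intro mult_left_mono) auto
    also have "\<dots> = \<phi> t * C ^ n * diameter N x 0" using False by (simp add: phi_def)
    finally show ?thesis .
  qed
  with decay show ?thesis by blast
qed

end
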